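(* For every integer $n\ge 2$, every independent set of the hypergraph $\mathtt{H}^{n}_{1}(\{0,1,2\})$ has size at most $\frac{2}{3}\cdot 3^n$.
   Context: $\mathtt{H}^{n}_{1}(\{0,1,2\})$ is the $3$-uniform hypergraph with vertex set $\{0,1,2\}^n$ in which three distinct vertices $\mathbf{x}^1,\mathbf{x}^2,\mathbf{x}^3$ form a hyperedge iff $\sum_{i=1}^n \big|\{0,1,2\}\setminus\{\mathbf{x}^1_i,\mathbf{x}^2_i,\mathbf{x}^3_i\}\big| \le 1$. An independent set is a set of vertices containing no hyperedge. *)

theory Defs
  imports Complex_Main
begin

text \<open>Vertices of H^n_1({0,1,2}): words in {0,1,2}^n, represented as functions
  nat => nat with values in {0,1,2} on {0..<n} and value 0 outside.\<close>
definition cube3 :: "nat \<Rightarrow> (nat \<Rightarrow> nat) set" where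
  "cube3 n = {x. (\<forall>i<n. x i \<in> {0,1,2}) \<and> (\<forall>i\<ge>n. x i = 0)}"

definition hedge3 :: "nat \<Rightarrow> (nat \<Rightarrow> nat) \<Rightarrow> (nat \<Rightarrow> nat) \<Rightarrow> (nat \<Rightarrow> nat) \<Rightarrow> bool" where
  "hedge3 n x y z \<longleftrightarrow> x \<in> cube3 n \<and> y \<in> cube3 n \<and> z \<in> cube3 n \<and>
     x \<noteq> y \<and> y \<noteq> z \<and> x \<noteq> z \<and>
     (\<Sum>i<n. card ({0,1,2::nat} - {x i, y i, z i})) \<le> 1"

definition indep3 :: "nat \<Rightarrow> (nat \<Rightarrow> nat) set \<Rightarrow> bool" where
  "indep3 n A \<longleftrightarrow> A \<subseteq> cube3 n \<and>
     (\<forall>x\<in>A. \<forall>y\<in>A. \<forall>z\<in>A. \<not> hedge3 n x y z)"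

end

theory Submission
  imports Defs "HOL-Library.FuncSet"
begin

text \<open>Adding 1 modulo 3 in every coordinate permutes the cube, and each orbit
  \<open>{x, x + 1, x + 2}\<close> is a hyperedge, since every coordinate of it uses all three
  symbols. Averaging the indicator of an independent set over the three translates of
  each vertex shows that the set contains at most two thirds of the cube.\<close>

lemma card_le_two_thirds_if_no_orbit_triple:
  fixes s :: "'a \<Rightarrow> 'a"
  assumes "finite C" "bij_betw s C C" "A \<subseteq> C"
    and no_triple: "\<And>x. x \<in> C \<Longrightarrow> \<not> (x \<in> A \<and> s x \<in> A \<and> s (s x) \<in> A)"
  shows "3 * card A \<le> 2 * card C"
proof -
  define \<chi> where "\<chi> x = (if x \<in> A then 1 else 0 :: nat)" for x
  have card_A: "(\<Sum>x\<in>C. \<chi> x) = card A"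
    using assms(1,3) by (simp add: \<chi>_def sum.If_cases Int_absorb1)
  have shift_invariant: "(\<Sum>x\<in>C. g (s x)) = (\<Sum>x\<in>C. g x)" for g :: "'a \<Rightarrow> nat"
    using sum.reindex_bij_betw[OF assms(2)] .
  have "3 * card A = (\<Sum>x\<in>C. \<chi> x + \<chi> (s x) + \<chi> (s (s x)))"
    using card_A shift_invariant[of \<chi>] shift_invariant[of "\<lambda>x. \<chi> (s x)"]
    by (simp add: sum.distrib)
  also have "\<dots> \<le> (\<Sum>x\<in>C. 2)"
    using no_triple by (intro sum_mono) (auto simp: \<chi>_def)
  finally show ?thesis by simp
qed

lemma card_cube3: "card (cube3 n) = 3 ^ n"
proof -
  have "bij_betw (\<lambda>f i. if i < n then f i else 0) (PiE {..<n} (\<lambda>_. {0,1,2::nat})) (cube3 n)"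
    by (rule bij_betw_byWitness[where f' = "\<lambda>x. restrict x {..<n}"])
      (auto simp: cube3_def PiE_def Pi_def extensional_def fun_eq_iff)
  then have "card (cube3 n) = card (PiE {..<n} (\<lambda>_. {0,1,2::nat}))"
    by (simp add: bij_betw_same_card)
  also have "\<dots> = 3 ^ n"
    by (simp add: card_PiE numeral_3_eq_3)
  finally show ?thesis .
qed

definition shift3 :: "nat \<Rightarrow> (nat \<Rightarrow> nat) \<Rightarrow> nat \<Rightarrow> nat" where
  "shift3 n x = (\<lambda>i. if i < n then Suc (x i) mod 3 else 0)"

lemma shift3_in_cube3: "x \<in> cube3 n \<Longrightarrow> shift3 n x \<in> cube3 n"
  unfolding cube3_def shift3_def by auto

lemma shift3_shift3_shift3: "x \<in> cube3 n \<Longrightarrow> shift3 n (shift3 n (shift3 n x)) = x"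
  unfolding cube3_def shift3_def by (auto simp: fun_eq_iff)

lemma bij_betw_shift3: "bij_betw (shift3 n) (cube3 n) (cube3 n)"
  by (rule bij_betw_byWitness[where f' = "\<lambda>x. shift3 n (shift3 n x)"])
    (auto simp: shift3_in_cube3 shift3_shift3_shift3 image_subset_iff)

lemma hedge3_shift3_orbit:
  assumes "x \<in> cube3 n" "n \<ge> 1"
  shows "hedge3 n x (shift3 n x) (shift3 n (shift3 n x))"
proof -
  let ?y = "shift3 n x" and ?z = "shift3 n (shift3 n x)"
  have coords: "x i \<in> {0,1,2}" "?y i = Suc (x i) mod 3" "?z i = Suc (Suc (x i) mod 3) mod 3"
    if "i < n" for i
    using assms(1) that by (auto simp: cube3_def shift3_def)
  have all_symbols: "{x i, ?y i, ?z i} = {0,1,2}" if "i < n" for i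
    using coords[OF that] by auto
  have "x 0 \<noteq> ?y 0" "?y 0 \<noteq> ?z 0" "x 0 \<noteq> ?z 0"
    using coords[of 0] assms(2) by auto
  then have "x \<noteq> ?y" "?y \<noteq> ?z" "x \<noteq> ?z"
    by auto
  then show ?thesis
    using assms(1) all_symbols by (simp add: hedge3_def shift3_in_cube3)
qed

theorem fact3p3:
  fixes n :: nat and A :: "(nat \<Rightarrow> nat) set"
  assumes "n \<ge> 2" and "indep3 n A"
  shows "real (card A) \<le> 2 / 3 * 3 ^ n"
proof -
  have "finite (cube3 n)"
    using card_cube3[of n] by (intro card_ge_0_finite) simp
  moreover have "A \<subseteq> cube3 n"
    using assms(2) by (simp add: indep3_def)
  moreover have "\<not> (x \<in> A \<and> shift3 n x \<in> A \<and> shift3 n (shift3 n x) \<in> A)" if "x \<in> cube3 n" for x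
    using hedge3_shift3_orbit[OF that] assms unfolding indep3_def by auto
  ultimately have "3 * card A \<le> 2 * card (cube3 n)"
    by (rule card_le_two_thirds_if_no_orbit_triple[OF _ bij_betw_shift3])
  then have "3 * card A \<le> 2 * 3 ^ n"
    by (simp add: card_cube3)
  then have "real (3 * card A) \<le> real (2 * 3 ^ n)"
    by (simp only: of_nat_le_iff)
  then show ?thesis
    by simp
qed

end
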